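(* Let $\phi_*$ be an irreducible representation of $\mathfrak{su}(2)$ of odd dimension $2\ell+1$ with integer $\ell\ge1$, and set $J_a=\phi_*(\sigma^a/2)$ for $a\in\{x,y,z\}$. Then each of the kernel projectors $K(J_x),K(J_y),K(J_z)$ has rank $1$, and there exist unit vectors $|x\rangle\in\ker J_x$, $|y\rangle\in\ker J_y$, $|z\rangle\in\ker J_z$ such that \[ \langle x|y\rangle=\langle y|z\rangle=\langle z|x\rangle=\begin{cases}\dfrac{(-1)^{\ell/2}}{2^\ell}\dbinom{\ell}{\ell/2}&\text{if $\ell$ is even},\\[2mm] 0&\text{if $\ell$ is odd}.\end{cases} \]
   Context: $K(H)$ is the orthogonal projector onto the kernel of a Hermitian operator $H$. $\sigma^x,\sigma^y,\sigma^z$ are the Pauli matrices, so $[J_x,J_y]=\mathrm iJ_z$ and cyclically. *)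

theory Defs
  imports "HOL-Analysis.Analysis"
begin

definition braket :: "complex^'n \<Rightarrow> complex^'n \<Rightarrow> complex" where
  "braket x y = (\<Sum>i\<in>UNIV. cnj (x $ i) * y $ i)"

definition adjoint_mat :: "complex^'n^'m \<Rightarrow> complex^'m^'n" where
  "adjoint_mat A = (\<chi> i j. cnj (A $ j $ i))"

definition hermitian :: "complex^'n^'n \<Rightarrow> bool" where
  "hermitian A \<longleftrightarrow> adjoint_mat A = A"

definition commutator :: "complex^'n^'n \<Rightarrow> complex^'n^'n \<Rightarrow> complex^'n^'n" where
  "commutator A B = A ** B - B ** A"

definition kernel_projector :: "complex^'n^'n \<Rightarrow> complex^'n^'n" where
  "kernel_projector H = (THE P. hermitian P \<and> P ** P = P \<and>
      range (\<lambda>v. P *v v) = {v. H *v v = 0})"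

definition csubspace_vec :: "(complex^'n) set \<Rightarrow> bool" where
  "csubspace_vec W \<longleftrightarrow> 0 \<in> W \<and> (\<forall>u\<in>W. \<forall>v\<in>W. u + v \<in> W) \<and> (\<forall>c u. u \<in> W \<longrightarrow> c *s u \<in> W)"

text \<open>A triple (J_x,J_y,J_z) = (phi(sigma^x/2), phi(sigma^y/2), phi(sigma^z/2)) of a
  (unitary) representation phi of su(2): Hermitian generators with [J_x,J_y] = i J_z cyclically.\<close>
definition su2_rep :: "complex^'n^'n \<Rightarrow> complex^'n^'n \<Rightarrow> complex^'n^'n \<Rightarrow> bool" where
  "su2_rep Jx Jy Jz \<longleftrightarrow> hermitian Jx \<and> hermitian Jy \<and> hermitian Jz \<and>
     commutator Jx Jy = mat \<i> ** Jz \<and> commutator Jy Jz = mat \<i> ** Jx \<and>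
     commutator Jz Jx = mat \<i> ** Jy"

definition su2_irreducible :: "complex^'n^'n \<Rightarrow> complex^'n^'n \<Rightarrow> complex^'n^'n \<Rightarrow> bool" where
  "su2_irreducible Jx Jy Jz \<longleftrightarrow>
     (\<forall>W. csubspace_vec W \<and> (\<forall>v\<in>W. Jx *v v \<in> W \<and> Jy *v v \<in> W \<and> Jz *v v \<in> W)
          \<longrightarrow> W = {0} \<or> W = UNIV)"

end

theory Submission
  imports Defs "Jordan_Normal_Form.Spectral_Radius" "HOL-Computational_Algebra.Formal_Power_Series"
begin

(* Lowering a highest-weight vector e_0 of J_z gives J_z-eigenvectors e_k = J_-^k e_0 of weight
   l - k. They are orthogonal, and irreducibility makes e_0, ..., e_2l a basis, so ker J_z is spanned
   by e_l; by the cyclic symmetry of the commutation relations ker J_x and ker J_y are lines too.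
   Writing J_x and J_y through J_+ and J_-, the coefficients <e_k|v> of a kernel vector v of J_x or
   J_y obey a two-step recurrence: they vanish for odd k and agree up to the sign (-1)^(k/2) for
   even k. By Parseval's identity the overlaps become convolutions of the central binomial
   coefficients binom(2m,m), with and without the sign (-1)^m, which the generating function
   (1 - 4X)^(-1/2) evaluates to 4^l and to 2^l binom(l,l/2) (for even l; 0 for odd l). Normalising
   the kernel vectors and choosing their signs then makes the three overlaps equal. *)

(* Jordan_Normal_Form is needed only for the existence of eigenvalues; its vector indexing
   would clash with that of Finite_Cartesian_Product. *)
no_notation Matrix.vec_index (infixl "$" 100)

section \<open>Hermitian geometry of complex vectors\<close>

lemma mat_vector_mult: "Finite_Cartesian_Product.mat c *v x = c *s (x :: 'a::comm_ring_1^'n)"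
proof -
  have "(\<Sum>j\<in>UNIV. (if i = j then c else 0) * x $ j) = c * x $ i" for i
    by (simp add: if_distrib[of "\<lambda>a. a * _"] cong: if_cong)
  then show ?thesis
    by (simp add: Finite_Cartesian_Product.vec_eq_iff matrix_vector_mult_def Finite_Cartesian_Product.mat_def)
qed

lemma braket_add_left: "braket (x + y) z = braket x z + braket y z"
  by (simp add: braket_def distrib_right sum.distrib)

lemma braket_add_right: "braket x (y + z) = braket x y + braket x z"
  by (simp add: braket_def distrib_left sum.distrib)

lemma braket_diff_left: "braket (x - y) z = braket x z - braket y z"
  by (simp add: braket_def left_diff_distrib sum_subtractf)

lemma braket_diff_right: "braket x (y - z) = braket x y - braket x z"
  by (simp add: braket_def right_diff_distrib sum_subtractf)

lemma braket_scale_left: "braket (c *s x) y = cnj c * braket x y"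
  by (simp add: braket_def sum_distrib_left mult_ac)

lemma braket_scale_right: "braket x (c *s y) = c * braket x y"
  by (simp add: braket_def sum_distrib_left mult_ac)

lemma braket_of_real_scale:
  "braket (complex_of_real a *s x) (complex_of_real b *s y) = complex_of_real (a * b) * braket x y"
  by (simp add: braket_scale_left braket_scale_right)

lemma braket_zero_left [simp]: "braket 0 x = 0"
  and braket_zero_right [simp]: "braket x 0 = 0"
  by (simp_all add: braket_def)

lemma braket_sum_right: "braket x (\<Sum>k\<in>S. f k) = (\<Sum>k\<in>S. braket x (f k))"
  by (induction S rule: infinite_finite_induct) (simp_all add: braket_add_right)

lemma cnj_braket: "cnj (braket x y) = braket y x"
  by (simp add: braket_def mult.commute)

lemma braket_self: "braket x x = complex_of_real ((norm x)\<^sup>2)"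
proof -
  have "braket x x = (\<Sum>i\<in>UNIV. complex_of_real ((cmod (x $ i))\<^sup>2))"
    unfolding braket_def
    by (rule sum.cong) (simp_all, metis complex_norm_square mult.commute of_real_power)
  then show ?thesis
    by (simp add: norm_vec_def L2_set_def sum_nonneg)
qed

lemma braket_self_eq_0_iff [simp]: "braket x x = 0 \<longleftrightarrow> x = 0"
  by (simp add: braket_self)

lemma norm_eq_1_if_braket_self:
  assumes "braket v v = 1"
  shows "norm v = 1"
proof -
  have "(norm v)\<^sup>2 = 1"
    using assms by (simp only: braket_self of_real_eq_1_iff)
  then show ?thesis
    using norm_ge_zero[of v] power2_eq_1_iff[of "norm v"] by linarith
qed

lemma braket_eq_imp_eq: "(\<And>w. braket w u = braket w v) \<Longrightarrow> u = v"
  by (metis braket_diff_right braket_self_eq_0_iff eq_iff_diff_eq_0)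

lemma braket_matrix_vector_mult: "braket x (A *v y) = braket (adjoint_mat A *v x) y"
proof -
  have "braket x (A *v y) = (\<Sum>i\<in>UNIV. \<Sum>j\<in>UNIV. cnj (x $ i) * A $ i $ j * y $ j)"
    by (simp add: braket_def matrix_vector_mult_def sum_distrib_left mult_ac)
  also have "\<dots> = (\<Sum>j\<in>UNIV. \<Sum>i\<in>UNIV. cnj (x $ i) * A $ i $ j * y $ j)"
    by (rule sum.swap)
  also have "\<dots> = braket (adjoint_mat A *v x) y"
    by (simp add: braket_def matrix_vector_mult_def adjoint_mat_def sum_distrib_left sum_distrib_right mult_ac)
  finally show ?thesis .
qed

lemma hermitian_braket: "hermitian A \<Longrightarrow> braket x (A *v y) = braket (A *v x) y"
  using braket_matrix_vector_mult[of x A y] by (simp add: hermitian_def)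

lemma hermitian_eigenvectors_orthogonal:
  assumes "hermitian H" "H *v x = a *s x" "H *v y = b *s y" "b \<noteq> cnj a"
  shows "braket x y = 0"
proof -
  have "b * braket x y = cnj a * braket x y"
    using hermitian_braket[OF assms(1), of x y] assms(2,3) by (simp add: braket_scale_left braket_scale_right)
  with assms(4) show ?thesis
    by simp
qed

lemma complex_matrix_eigenvector_exists:
  fixes C :: "complex^'n^'n"
  obtains c v where "v \<noteq> 0" "C *v v = c *s v"
proof -
  let ?n = "CARD('n)"
  obtain g :: "nat \<Rightarrow> 'n" where g: "bij_betw g {0..<?n} UNIV"
    using ex_bij_betw_nat_finite[of "UNIV :: 'n set"] by auto
  define gi where "gi = inv_into {0..<?n} g"
  have g_gi: "g (gi i) = i" and gi_less: "gi i < ?n" for i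
    using g bij_betw_inv_into_right bij_betwE bij_betw_inv_into unfolding gi_def by fastforce+
  have gi_g: "t < ?n \<Longrightarrow> gi (g t) = t" for t
    unfolding gi_def using g by (simp add: bij_betw_inv_into_left)
  define M where "M = Matrix.mat ?n ?n (\<lambda>(i, j). C $ g i $ g j)"
  have M: "M \<in> carrier_mat ?n ?n"
    unfolding M_def by simp
  obtain k where "eigenvalue M k"
    using spectrum_non_empty[OF M] unfolding spectrum_def by auto
  then obtain w where w: "w \<in> carrier_vec ?n" "w \<noteq> 0\<^sub>v ?n" "M *\<^sub>v w = k \<cdot>\<^sub>v w"
    unfolding eigenvalue_def eigenvector_def using M by auto
  define v :: "complex^'n" where "v = (\<chi> i. vec_index w (gi i))"
  have "C *v v = k *s v"
  proof (rule Finite_Cartesian_Product.vec_eq_iff[THEN iffD2], rule allI)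
    fix i :: 'n
    have "(C *v v) $ i = (\<Sum>j\<in>UNIV. C $ i $ j * vec_index w (gi j))"
      by (simp add: matrix_vector_mult_def v_def)
    also have "\<dots> = (\<Sum>t\<in>{0..<?n}. C $ i $ g t * vec_index w t)"
      using sum.reindex_bij_betw[OF g, of "\<lambda>j. C $ i $ j * vec_index w (gi j)"] gi_g by simp
    also have "\<dots> = vec_index (M *\<^sub>v w) (gi i)"
      using w(1) gi_less[of i] by (simp add: M_def scalar_prod_def g_gi)
    also have "\<dots> = (k *s v) $ i"
      using w gi_less[of i] by (simp add: v_def)
    finally show "(C *v v) $ i = (k *s v) $ i" .
  qed
  moreover have "v \<noteq> 0"
  proof
    assume "v = 0"
    then have "vec_index w t = 0" if "t < ?n" for t
      using that gi_g[OF that] Finite_Cartesian_Product.vec_eq_iff[of v 0] by (metis v_def vec_lambda_beta zero_index)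
    with w(1,2) show False
      by (auto simp: Matrix.vec_eq_iff)
  qed
  ultimately show thesis
    using that by blast
qed

lemma matrix_vector_mult_span_invariant:
  assumes "\<And>x. x \<in> S \<Longrightarrow> M *v x \<in> vec.span S" and "v \<in> vec.span S"
  shows "M *v v \<in> vec.span S"
  using assms(2)
proof (induction rule: vec.span_induct_alt)
  case (step c x y)
  then show ?case
    by (simp add: vec.add vec.scale vec.span_add vec.span_scale assms(1))
qed (simp add: vec.span_zero)

lemma orthogonal_family_card_le:
  fixes f :: "'i \<Rightarrow> complex^'n"
  assumes "finite I" and nonzero: "\<And>i. i \<in> I \<Longrightarrow> f i \<noteq> 0"
    and orth: "\<And>i j. i \<in> I \<Longrightarrow> j \<in> I \<Longrightarrow> i \<noteq> j \<Longrightarrow> braket (f i) (f j) = 0"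
  shows "card I \<le> CARD('n)"
proof -
  have inj: "inj_on f I"
    by (rule inj_onI) (metis braket_self_eq_0_iff nonzero orth)
  have "vec.independent (f ` I)"
  proof (rule vec.independent_if_scalars_zero)
    fix u x assume sum0: "(\<Sum>y\<in>f ` I. u y *s y) = 0" and x: "x \<in> f ` I"
    have "0 = braket x (\<Sum>y\<in>f ` I. u y *s y)"
      by (simp add: sum0)
    also have "\<dots> = (\<Sum>y\<in>f ` I. if y = x then u x * braket x x else 0)"
      unfolding braket_sum_right braket_scale_right
      by (rule sum.cong) (use x orth in auto)
    also have "\<dots> = u x * braket x x"
      using x \<open>finite I\<close> by simp
    finally show "u x = 0"
      using x nonzero by auto
  qed (use \<open>finite I\<close> nonzero in auto)
  then have "card (f ` I) \<le> CARD('n)"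
    using vec.independent_card_le_dim[of "f ` I" UNIV] by (simp add: card_cart_basis)
  then show ?thesis
    by (simp add: card_image[OF inj])
qed

lemma orthogonal_sequence_has_zero:
  fixes f :: "nat \<Rightarrow> complex^'n"
  assumes "\<And>a b. a \<noteq> b \<Longrightarrow> braket (f a) (f b) = 0"
  shows "\<exists>k. f k = 0"
  using orthogonal_family_card_le[of "{..CARD('n)}" f] assms by fastforce

lemma orthogonal_family_expansion:
  fixes f :: "'i \<Rightarrow> complex^'n"
  assumes "finite I" and card: "card I = CARD('n)" and nonzero: "\<And>i. i \<in> I \<Longrightarrow> f i \<noteq> 0"
    and orth: "\<And>i j. i \<in> I \<Longrightarrow> j \<in> I \<Longrightarrow> i \<noteq> j \<Longrightarrow> braket (f i) (f j) = 0"
  shows "v = (\<Sum>i\<in>I. (braket (f i) v / braket (f i) (f i)) *s f i)"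
proof (rule ccontr)
  (* The residue r is orthogonal to the whole family; adjoining it would exceed the dimension. *)
  define r where "r = v - (\<Sum>i\<in>I. (braket (f i) v / braket (f i) (f i)) *s f i)"
  assume "\<not> ?thesis"
  then have "r \<noteq> 0"
    by (simp add: r_def)
  have r_orth: "braket (f j) r = 0" if "j \<in> I" for j
  proof -
    have "braket (f j) (\<Sum>i\<in>I. (braket (f i) v / braket (f i) (f i)) *s f i)
        = (\<Sum>i\<in>I. if i = j then braket (f j) v else 0)"
      unfolding braket_sum_right braket_scale_right
      by (rule sum.cong) (use that nonzero orth in auto)
    then show ?thesis
      using that \<open>finite I\<close> by (simp add: r_def braket_diff_right)
  qed
  have r_orth': "braket r (f j) = 0" if "j \<in> I" for j
    by (metis cnj_braket complex_cnj_zero r_orth that)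
  define g where "g = case_option r f"
  have "card (insert None (Some ` I)) \<le> CARD('n)"
  proof (rule orthogonal_family_card_le[of _ g])
    fix a b assume "a \<in> insert None (Some ` I)" "b \<in> insert None (Some ` I)" "a \<noteq> b"
    then show "braket (g a) (g b) = 0"
      by (cases a; cases b) (auto simp: g_def r_orth r_orth' orth)
  qed (use \<open>finite I\<close> \<open>r \<noteq> 0\<close> nonzero in \<open>auto simp: g_def\<close>)
  then show False
    using \<open>finite I\<close> card by (simp add: card_image)
qed

lemma norm_of_real_scale_eq_1:
  assumes "braket v v = complex_of_real V" "a * a * V = 1"
  shows "norm (complex_of_real a *s v) = 1"
proof (rule norm_eq_1_if_braket_self)
  show "braket (complex_of_real a *s v) (complex_of_real a *s v) = 1"
    using assms by (simp only: braket_of_real_scale flip: of_real_mult) simp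
qed

lemma rescale_to_equal_overlaps:
  fixes x y z :: "complex^'n" and X Z c g \<sigma> :: real
  assumes "braket x x = X" "braket y y = X" "braket z z = Z" "X > 0" "Z > 0"
    and "braket x y = \<sigma> * c * X" "braket y z = \<sigma> * g" "braket z x = g"
    and "\<sigma>\<^sup>2 = 1" "g\<^sup>2 = c\<^sup>2 * X * Z"
  shows "\<exists>a b t. norm (a *s x) = 1 \<and> norm (b *s y) = 1 \<and> norm (t *s z) = 1 \<and>
    braket (a *s x) (b *s y) = c \<and> braket (b *s y) (t *s z) = c \<and> braket (t *s z) (a *s x) = c"
proof -
  define r q where "r = sqrt X" and "q = sqrt Z"
  have r: "r \<noteq> 0" "X = r * r" and q: "q \<noteq> 0" "Z = q * q"
    using assms(4,5) by (simp_all add: r_def q_def)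
  have \<sigma>: "\<sigma> * \<sigma> = 1"
    using assms(9) by (simp add: power2_eq_square)
  define \<tau> where "\<tau> = (if g = c * (r * q) then 1 else -1 :: real)"
  have "g\<^sup>2 = (c * (r * q))\<^sup>2"
    using assms(10) r q by (simp add: power2_eq_square algebra_simps)
  then have \<tau>: "\<tau> * g = c * (r * q)"
    by (auto simp: \<tau>_def power2_eq_iff)
  have "norm (complex_of_real (1 / r) *s x) = 1"
    by (rule norm_of_real_scale_eq_1[OF assms(1)]) (simp add: r field_simps)
  moreover have "norm (complex_of_real (\<sigma> / r) *s y) = 1"
    by (rule norm_of_real_scale_eq_1[OF assms(2)]) (simp add: r \<sigma> assms(9) field_simps)
  moreover have "norm (complex_of_real (\<tau> / q) *s z) = 1"
    by (rule norm_of_real_scale_eq_1[OF assms(3)]) (simp add: q \<tau>_def field_simps)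
  moreover have "braket (complex_of_real (1 / r) *s x) (complex_of_real (\<sigma> / r) *s y) = c"
    by (simp only: braket_of_real_scale assms(6) of_real_eq_iff flip: of_real_mult)
      (simp add: r \<sigma> assms(9) field_simps)
  moreover have "braket (complex_of_real (\<sigma> / r) *s y) (complex_of_real (\<tau> / q) *s z) = c"
    by (simp only: braket_of_real_scale assms(7) of_real_eq_iff flip: of_real_mult)
      (use \<tau> in \<open>simp add: r q \<sigma> assms(9) field_simps\<close>)
  moreover have "braket (complex_of_real (\<tau> / q) *s z) (complex_of_real (1 / r) *s x) = c"
    by (simp only: braket_of_real_scale assms(8) of_real_eq_iff flip: of_real_mult)
      (use \<tau> in \<open>simp add: r q field_simps\<close>)
  ultimately show ?thesis
    by blast
qed

lemma rank_outer_product: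
  fixes u w :: "'a::field^'n"
  assumes "u \<noteq> 0" "w \<noteq> 0"
  shows "rank (\<chi> i j. u $ i * w $ j) = 1"
proof -
  define R where "R = range (\<lambda>i. u $ i *s w)"
  have rows: "Finite_Cartesian_Product.rows (\<chi> i j. u $ i * w $ j) = R"
    by (auto simp: R_def Finite_Cartesian_Product.rows_def Finite_Cartesian_Product.row_def
        Finite_Cartesian_Product.vec_eq_iff)
  obtain i where "u $ i \<noteq> 0"
    using assms(1) by (auto simp: Finite_Cartesian_Product.vec_eq_iff)
  then have "w = inverse (u $ i) *s (u $ i *s w)"
    by (simp add: vec.scale_scale)
  then have "w \<in> vec.span R"
    by (metis R_def rangeI vec.span_base vec.span_scale)
  moreover have "R \<subseteq> vec.span {w}"
    by (auto simp: R_def intro: vec.span_scale vec.span_base)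
  ultimately have "vec.span R = vec.span {w}"
    by (simp add: vec.span_eq)
  then have "vec.dim R = vec.dim {w}"
    by (metis vec.dim_span)
  then show ?thesis
    using assms(2) by (simp add: row_rank_def_gen rows)
qed

lemma kernel_projector_eqI:
  assumes P: "hermitian P" "P ** P = P" "range (\<lambda>v. P *v v) = {v. H *v v = 0}"
  shows "kernel_projector H = P"
  unfolding kernel_projector_def
proof (rule the_equality)
  fix Q assume "hermitian Q \<and> Q ** Q = Q \<and> range (\<lambda>v. Q *v v) = {v. H *v v = 0}"
  then have Q: "hermitian Q" "Q ** Q = Q" "range (\<lambda>v. Q *v v) = range (\<lambda>v. P *v v)"
    using P(3) by auto
  have idem: "R *v (R *v v) = R *v v" if "R ** R = R" for R :: "complex^'n^'n" and v
    by (simp add: matrix_vector_mul_assoc that)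
  have PQ: "P *v (Q *v v) = Q *v v" for v
  proof -
    obtain z where "Q *v v = P *v z"
      using Q(3) by (metis rangeE rangeI)
    then show ?thesis
      by (simp add: idem[OF P(2)])
  qed
  have QP: "Q *v (P *v v) = P *v v" for v
  proof -
    obtain z where "P *v v = Q *v z"
      using Q(3) by (metis rangeE rangeI)
    then show ?thesis
      by (simp add: idem[OF Q(2)])
  qed
  show "Q = P"
  proof (rule matrix_eq[THEN iffD2], intro allI braket_eq_imp_eq)
    fix v w
    have "braket w (Q *v v) = braket (P *v w) (Q *v v)"
      by (simp add: PQ flip: hermitian_braket[OF P(1)])
    also have "\<dots> = braket w (P *v v)"
      by (simp add: hermitian_braket[OF Q(1)] hermitian_braket[OF P(1)] QP)
    finally show "braket w (Q *v v) = braket w (P *v v)" .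
  qed
qed (use P in auto)

lemma kernel_projector_unit_line:
  fixes H :: "complex^'n^'n"
  assumes e: "braket e e = 1" and ker: "{v. H *v v = 0} = range (\<lambda>c. c *s e)"
  shows "kernel_projector H = (\<chi> i j. e $ i * cnj (e $ j))"
proof (rule kernel_projector_eqI)
  define P :: "complex^'n^'n" where "P = (\<chi> i j. e $ i * cnj (e $ j))"
  have Pv: "P *v v = braket e v *s e" for v
    by (simp add: P_def matrix_vector_mult_def braket_def Finite_Cartesian_Product.vec_eq_iff
        sum_distrib_left mult_ac)
  then have P_e: "P *v (c *s e) = c *s e" for c
    by (simp add: braket_scale_right e)
  show "hermitian P"
    by (simp add: hermitian_def adjoint_mat_def P_def mult.commute)
  show "P ** P = P"
    by (rule matrix_eq[THEN iffD2]) (simp add: matrix_vector_mul_assoc[symmetric] Pv braket_scale_right e)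
  show "range (\<lambda>v. P *v v) = {v. H *v v = 0}"
    unfolding ker
  proof (intro equalityI image_subsetI)
    show "P *v v \<in> range (\<lambda>c. c *s e)" for v
      unfolding Pv by (rule rangeI)
    show "c *s e \<in> range (\<lambda>v. P *v v)" for c
      by (subst P_e[symmetric]) (rule rangeI)
  qed
qed

lemma rank_kernel_projector_line:
  fixes H :: "complex^'n^'n"
  assumes "u \<noteq> 0" and ker: "{v. H *v v = 0} = range (\<lambda>c. c *s u)"
  shows "rank (kernel_projector H) = 1"
proof -
  define e where "e = complex_of_real (1 / norm u) *s u"
  have e: "braket e e = 1"
    using assms(1) by (simp add: e_def braket_scale_left braket_scale_right braket_self[of u] power2_eq_square)
  have u_e: "c *s u = (c * norm u) *s e" and e_u: "c *s e = (c / norm u) *s u" for c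
    using assms(1) by (simp_all add: e_def vec.scale_scale)
  have "range (\<lambda>c. c *s u) = range (\<lambda>c. c *s e)"
  proof (intro equalityI image_subsetI)
    show "c *s u \<in> range (\<lambda>c. c *s e)" "c *s e \<in> range (\<lambda>c. c *s u)" for c
      by (simp_all only: u_e[of c] e_u[of c]) (rule rangeI)+
  qed
  then have "kernel_projector H = (\<chi> i j. e $ i * cnj (e $ j))"
    using kernel_projector_unit_line[OF e] ker by simp
  moreover have "e \<noteq> 0"
    using e by auto
  moreover from this have "(\<chi> j. cnj (e $ j)) \<noteq> 0"
    by (simp add: Finite_Cartesian_Product.vec_eq_iff)
  ultimately show ?thesis
    using rank_outer_product[of e "\<chi> j. cnj (e $ j)"] by simp
qed

section \<open>Central binomial convolutions\<close>

lemma sum_atMost_double_odd_zero: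
  fixes h :: "nat \<Rightarrow> 'a::comm_monoid_add"
  assumes "\<And>q. h (2 * q + 1) = 0"
  shows "(\<Sum>k\<le>2 * n. h k) = (\<Sum>q\<le>n. h (2 * q))"
proof (induction n)
  case (Suc n)
  have "{..2 * Suc n} = insert (Suc (Suc (2 * n))) (insert (Suc (2 * n)) {..2 * n})"
    by auto
  then show ?case
    using Suc assms[of n] by (simp add: add.commute)
qed simp

definition central_binom :: "nat \<Rightarrow> real" where
  "central_binom m = real ((2 * m) choose m)"

lemma central_binom_pos: "central_binom m > 0"
  by (simp add: central_binom_def)

lemma central_binom_Suc: "real (Suc m) * central_binom (Suc m) = 2 * (2 * real m + 1) * central_binom m"
proof -
  have binom: "central_binom k = fact (2 * k) / (fact k * fact k)" for k
    by (simp add: central_binom_def binomial_fact mult_2)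
  have "fact (2 * Suc m) = (2 * real m + 2) * (2 * real m + 1) * (fact (2 * m) :: real)"
    by (simp add: algebra_simps)
  then show ?thesis
    unfolding binom by (simp add: field_simps del: fact_Suc) (simp add: algebra_simps)
qed

lemma central_binom_product_Suc:
  assumes "m < l"
  shows "(2 * real m + 1) * (2 * real l - 2 * real m) * (central_binom m * central_binom (l - m))
    = (2 * real m + 2) * (2 * real l - 2 * real m - 1) * (central_binom (Suc m) * central_binom (l - Suc m))"
proof -
  have upper: "(real l - real m) * central_binom (l - m)
      = 2 * (2 * (real l - real m) - 1) * central_binom (l - Suc m)"
    using central_binom_Suc[of "l - Suc m"] assms by (simp add: Suc_diff_Suc of_nat_diff algebra_simps)
  have "(2 * real m + 1) * (2 * real l - 2 * real m) * (central_binom m * central_binom (l - m))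
      = (2 * (2 * real m + 1) * central_binom m) * ((real l - real m) * central_binom (l - m))"
    by (simp add: algebra_simps)
  also have "\<dots> = (real (Suc m) * central_binom (Suc m))
      * (2 * (2 * (real l - real m) - 1) * central_binom (l - Suc m))"
    by (simp only: central_binom_Suc upper)
  finally show ?thesis
    by (simp add: algebra_simps)
qed

lemma central_binom_gbinomial: "central_binom m = (-4) ^ m * ((-1/2) gchoose m)"
proof (induction m)
  case 0
  then show ?case
    by (simp add: central_binom_def)
next
  case (Suc m)
  have rec: "real (Suc m) * ((-1/2) gchoose Suc m) = (-1/2 - real m) * ((-1/2) gchoose m)"
    by (simp only: gbinomial_absorption gbinomial_absorb_comp)
  have "real (Suc m) * central_binom (Suc m) = (-4) ^ m * (2 * (2 * real m + 1) * ((-1/2) gchoose m))"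
    unfolding central_binom_Suc Suc by (simp only: ac_simps)
  also have "\<dots> = (-4) ^ Suc m * ((-1/2 - real m) * ((-1/2) gchoose m))"
    by (simp add: algebra_simps)
  also have "\<dots> = (-4) ^ Suc m * (real (Suc m) * ((-1/2) gchoose Suc m))"
    by (simp only: rec)
  also have "\<dots> = real (Suc m) * ((-4) ^ Suc m * ((-1/2) gchoose Suc m))"
    by (rule mult.left_commute)
  finally show ?case
    by (simp only: mult_cancel_left of_nat_eq_0_iff nat.distinct simp_thms)
qed

lemma central_binom_convolution: "(\<Sum>m\<le>l. central_binom m * central_binom (l - m)) = 4 ^ l"
proof -
  have "(\<Sum>m\<le>l. central_binom m * central_binom (l - m))
      = (\<Sum>m\<le>l. (-4) ^ l * (((-1/2) gchoose m) * ((-1/2) gchoose (l - m))))"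
    by (rule sum.cong) (simp_all add: central_binom_gbinomial power_add[symmetric] mult_ac)
  also have "\<dots> = (-4) ^ l * ((-1 :: real) gchoose l)"
    using gbinomial_Vandermonde[of "-1/2 :: real" "-1/2" l] by (simp add: atLeast0AtMost flip: sum_distrib_left)
  also have "\<dots> = 4 ^ l"
    by (simp add: gbinomial_minus[of 1, simplified] binomial_gbinomial[symmetric] flip: power_mult_distrib)
  finally show ?thesis .
qed

definition fps_spread :: "'a::zero fps \<Rightarrow> 'a fps" where
  "fps_spread f = Abs_fps (\<lambda>n. if even n then fps_nth f (n div 2) else 0)"

lemma fps_spread_mult:
  fixes f g :: "'a::comm_ring_1 fps"
  shows "fps_spread f * fps_spread g = fps_spread (f * g)"
proof (rule fps_ext)
  fix n
  show "fps_nth (fps_spread f * fps_spread g) n = fps_nth (fps_spread (f * g)) n"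
  proof (cases "even n")
    case True
    then obtain p where p: "n = 2 * p"
      by blast
    have "fps_nth (fps_spread f * fps_spread g) n
        = (\<Sum>k\<le>2 * p. fps_nth (fps_spread f) k * fps_nth (fps_spread g) (2 * p - k))"
      by (simp add: p fps_mult_nth atLeast0AtMost)
    also have "\<dots> = (\<Sum>q\<le>p. fps_nth (fps_spread f) (2 * q) * fps_nth (fps_spread g) (2 * p - 2 * q))"
      by (rule sum_atMost_double_odd_zero) (simp add: fps_spread_def)
    also have "\<dots> = fps_nth (fps_spread (f * g)) n"
      by (simp add: fps_spread_def p fps_mult_nth atLeast0AtMost flip: diff_mult_distrib2)
    finally show ?thesis .
  next
    case False
    then show ?thesis
      by (auto simp: fps_spread_def fps_mult_nth intro!: sum.neutral)
  qed
qed

lemma fps_square_eq_imp_eq: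
  fixes f g :: "'a::field_char_0 fps"
  assumes "f\<^sup>2 = g\<^sup>2" "fps_nth f 0 = 1" "fps_nth g 0 = 1"
  shows "f = g"
proof -
  let ?r = "\<lambda>_ _. 1 :: 'a"
  have "fps_nth (g\<^sup>2) 0 = 1"
    using assms(3) by (simp add: power2_eq_square fps_mult_nth)
  then have "f = fps_radical ?r (Suc 1) (g\<^sup>2)" "g = fps_radical ?r (Suc 1) (g\<^sup>2)"
    using radical_unique[of ?r 1 "g\<^sup>2" f] radical_unique[of ?r 1 "g\<^sup>2" g] assms
    by (simp_all add: numeral_2_eq_2)
  then show ?thesis
    by simp
qed

lemma alternating_sum_minus_one: "(\<Sum>i\<le>n. (-1 :: 'a::ring_1) ^ i) = (if even n then 1 else 0)"
  by (induction n) simp_all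

lemma geometric_series_alternating_product:
  "(Abs_fps (\<lambda>n. 4 ^ n) oo (fps_const (-1) * fps_X)) * Abs_fps (\<lambda>n. 4 ^ n)
     = fps_spread (Abs_fps (\<lambda>n. 16 ^ n :: real))"
proof (rule fps_ext)
  fix n
  have "fps_nth ((Abs_fps (\<lambda>n. 4 ^ n) oo (fps_const (-1) * fps_X)) * Abs_fps (\<lambda>n. 4 ^ n)) n
      = (\<Sum>i\<le>n. 4 ^ n * (-1 :: real) ^ i)"
    unfolding fps_mult_nth fps_compose_linear fps_nth_Abs_fps atLeast0AtMost
    by (rule sum.cong) (simp_all add: power_add[symmetric] power_mult_distrib)
  then show "fps_nth ((Abs_fps (\<lambda>n. 4 ^ n) oo (fps_const (-1) * fps_X)) * Abs_fps (\<lambda>n. 4 ^ n)) n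
      = fps_nth (fps_spread (Abs_fps (\<lambda>n. 16 ^ n :: real))) n"
    by (auto simp: fps_spread_def alternating_sum_minus_one power_mult elim!: evenE
        simp flip: sum_distrib_left)
qed

lemma alternating_central_binom_convolution:
  "(\<Sum>m\<le>l. (-1) ^ m * central_binom m * central_binom (l - m))
     = (if even l then 4 ^ (l div 2) * central_binom (l div 2) else 0)"
proof -
  (* F is (1 - 4X)^(-1/2); both F(-X) F(X) and F(4X^2) are (1 - 16X^2)^(-1/2), which is seen
     by comparing their squares *)
  define F where "F = Abs_fps central_binom"
  define B where "B = fps_spread (Abs_fps (\<lambda>n. 16 ^ n :: real))"
  have FF: "F * F = Abs_fps (\<lambda>n. 4 ^ n)"
    by (simp add: fps_eq_iff fps_mult_nth F_def atLeast0AtMost central_binom_convolution)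
  have "((F oo (fps_const (-1) * fps_X)) * F)\<^sup>2 = ((F * F) oo (fps_const (-1) * fps_X)) * (F * F)"
    by (simp add: power2_eq_square fps_compose_mult_distrib ac_simps)
  also have "\<dots> = B"
    unfolding FF B_def by (rule geometric_series_alternating_product)
  finally have G: "((F oo (fps_const (-1) * fps_X)) * F)\<^sup>2 = B" .
  have "(fps_spread (F oo (fps_const 4 * fps_X)))\<^sup>2 = fps_spread ((F * F) oo (fps_const 4 * fps_X))"
    by (simp add: power2_eq_square fps_spread_mult fps_compose_mult_distrib)
  also have "\<dots> = B"
  proof -
    have "(4::real) ^ n * 4 ^ n = 16 ^ n" for n
      by (simp flip: power_mult_distrib)
    then show ?thesis
      by (simp add: B_def FF fps_compose_linear)
  qed
  finally have H: "(fps_spread (F oo (fps_const 4 * fps_X)))\<^sup>2 = B" .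
  have "(F oo (fps_const (-1) * fps_X)) * F = fps_spread (F oo (fps_const 4 * fps_X))"
    by (rule fps_square_eq_imp_eq)
      (simp_all only: G H, simp_all add: F_def central_binom_def fps_spread_def fps_compose_linear fps_mult_nth)
  then have "fps_nth ((F oo (fps_const (-1) * fps_X)) * F) l = fps_nth (fps_spread (F oo (fps_const 4 * fps_X))) l"
    by simp
  then show ?thesis
    by (simp add: F_def fps_spread_def fps_compose_linear fps_mult_nth atLeast0AtMost mult.assoc)
qed

definition central_overlap :: "nat \<Rightarrow> real" where
  "central_overlap l = (if even l then (-1) ^ (l div 2) / 2 ^ l * real (l choose (l div 2)) else 0)"

definition parity_sign :: "nat \<Rightarrow> real" where
  "parity_sign l = (if even l then (-1) ^ (l div 2) else 1)"

lemma parity_sign_sq: "(parity_sign l)\<^sup>2 = 1"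
  by (simp add: parity_sign_def flip: power_mult)

lemma alternating_convolution_eq_overlap:
  "(if even l then 4 ^ (l div 2) * central_binom (l div 2) else 0) = parity_sign l * central_overlap l * 4 ^ l"
proof (cases "even l")
  case True
  then obtain p where l: "l = 2 * p"
    by blast
  have sign: "(-1::real) ^ p * (-1) ^ p = 1"
    by (simp flip: power_mult_distrib)
  have "(4::real) ^ (2 * p) = 2 ^ (2 * p) * 4 ^ p"
    by (simp add: power_mult flip: power_mult_distrib)
  then show ?thesis
    by (simp add: l parity_sign_def central_overlap_def central_binom_def mult.assoc[symmetric] sign)
qed (simp add: central_overlap_def)

lemma central_overlap_sq: "(central_overlap (2 * p))\<^sup>2 * 4 ^ (2 * p) = central_binom p * central_binom p"
proof -
  have "(2::real) ^ (2 * p) * 2 ^ (2 * p) = 4 ^ (2 * p)"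
    by (simp flip: power_mult_distrib)
  then show ?thesis
    by (simp add: central_overlap_def central_binom_def power2_eq_square field_simps)
qed

(* For s = -1 and s = 1 these are the coefficients <e_k|v> of a kernel vector v of J_x and of J_y,
   normalised by <e_0|v> = 1. *)
fun kernel_coeff :: "real \<Rightarrow> nat \<Rightarrow> nat \<Rightarrow> real" where
  "kernel_coeff s l 0 = 1"
| "kernel_coeff s l (Suc 0) = 0"
| "kernel_coeff s l (Suc (Suc k)) = s * (real (Suc k) * (2 * real l - real k)) * kernel_coeff s l k"

lemma kernel_coeff_odd [simp]: "kernel_coeff s l (Suc (2 * m)) = 0"
  by (induction m) simp_all

lemma kernel_coeff_even: "kernel_coeff s l (2 * m) = s ^ m * kernel_coeff 1 l (2 * m)"
  by (induction m) (simp_all add: algebra_simps)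

lemma kernel_coeff_middle: "kernel_coeff 1 l l = parity_sign l * kernel_coeff (-1) l l"
proof (cases "even l")
  case True
  then obtain p where l: "l = 2 * p"
    by blast
  have "(-1::real) ^ p * (-1) ^ p = 1"
    by (simp flip: power_mult_distrib)
  then show ?thesis
    using kernel_coeff_even[of "-1" l p] by (simp add: l parity_sign_def mult.assoc[symmetric])
qed (auto simp: parity_sign_def elim!: oddE)

section \<open>Ladder operators\<close>

lemma commutator_apply:
  assumes "commutator X Y = Finite_Cartesian_Product.mat \<i> ** Z"
  shows "X *v (Y *v v) = Y *v (X *v v) + \<i> *s (Z *v v)"
proof -
  have "X *v (Y *v v) - Y *v (X *v v) = \<i> *s (Z *v v)"
    using arg_cong[OF assms, of "\<lambda>M. M *v v"]
    by (simp add: commutator_def matrix_vector_mult_diff_rdistrib mat_vector_mult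
        flip: matrix_vector_mul_assoc)
  then show ?thesis
    by (simp add: algebra_simps)
qed

locale su2_representation =
  fixes Jx Jy Jz :: "complex^'n^'n"
  assumes rep: "su2_rep Jx Jy Jz"
begin

lemma hermitian_Jx: "hermitian Jx" and hermitian_Jy: "hermitian Jy" and hermitian_Jz: "hermitian Jz"
  using rep by (simp_all add: su2_rep_def)

lemma Jx_Jy: "Jx *v (Jy *v v) = Jy *v (Jx *v v) + \<i> *s (Jz *v v)"
  and Jy_Jz: "Jy *v (Jz *v v) = Jz *v (Jy *v v) + \<i> *s (Jx *v v)"
  and Jz_Jx: "Jz *v (Jx *v v) = Jx *v (Jz *v v) + \<i> *s (Jy *v v)"
  using rep by (simp_all add: su2_rep_def commutator_apply)

definition Jp :: "complex^'n^'n" where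
  "Jp = Jx + Finite_Cartesian_Product.mat \<i> ** Jy"

definition Jm :: "complex^'n^'n" where
  "Jm = Jx - Finite_Cartesian_Product.mat \<i> ** Jy"

lemma Jp_apply: "Jp *v v = Jx *v v + \<i> *s (Jy *v v)"
  and Jm_apply: "Jm *v v = Jx *v v - \<i> *s (Jy *v v)"
  by (simp_all add: Jp_def Jm_def matrix_vector_mult_add_rdistrib matrix_vector_mult_diff_rdistrib
      mat_vector_mult flip: matrix_vector_mul_assoc)

lemma Jz_Jp: "Jz *v (Jp *v v) = Jp *v (Jz *v v) + Jp *v v"
  by (simp add: Jp_apply vec.add vec.scale Jz_Jx Jy_Jz Finite_Cartesian_Product.vec_eq_iff algebra_simps)

lemma Jz_Jm: "Jz *v (Jm *v v) = Jm *v (Jz *v v) - Jm *v v"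
  by (simp add: Jm_apply vec.diff vec.scale Jz_Jx Jy_Jz Finite_Cartesian_Product.vec_eq_iff algebra_simps)

lemma Jp_Jm: "Jp *v (Jm *v v) = Jm *v (Jp *v v) + 2 *s (Jz *v v)"
  by (simp add: Jp_apply Jm_apply vec.add vec.diff vec.scale Jx_Jy Finite_Cartesian_Product.vec_eq_iff
      algebra_simps)

lemma braket_Jp: "braket x (Jp *v y) = braket (Jm *v x) y"
  by (simp add: Jp_apply Jm_apply braket_add_right braket_diff_left braket_scale_right braket_scale_left
      hermitian_braket[OF hermitian_Jx] hermitian_braket[OF hermitian_Jy])

lemma braket_Jm: "braket x (Jm *v y) = braket (Jp *v x) y"
  by (simp add: Jp_apply Jm_apply braket_add_left braket_diff_right braket_scale_right braket_scale_left
      hermitian_braket[OF hermitian_Jx] hermitian_braket[OF hermitian_Jy])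

lemma Jp_plus_Jm: "Jp *v v + Jm *v v = 2 *s (Jx *v v)"
  and Jp_minus_Jm: "Jp *v v - Jm *v v = (2 * \<i>) *s (Jy *v v)"
  by (simp_all add: Jp_apply Jm_apply Finite_Cartesian_Product.vec_eq_iff)

lemma Jz_eigenvectors_orthogonal:
  assumes "Jz *v x = a *s x" "Jz *v y = b *s y" "Re a \<noteq> Re b"
  shows "braket x y = 0"
proof (rule hermitian_eigenvectors_orthogonal[OF hermitian_Jz assms(1,2)])
  show "b \<noteq> cnj a"
    using assms(3) by auto
qed

lemma highest_weight_vector_exists:
  obtains h j where "h \<noteq> 0" "Jp *v h = 0" "Jz *v h = j *s h"
proof -
  obtain a v where v: "v \<noteq> 0" "Jz *v v = a *s v"
    using complex_matrix_eigenvector_exists by blast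
  (* Raising shifts the weight by 1, and eigenvectors of distinct weights are orthogonal, so the
     raised vectors eventually vanish. *)
  define f where "f k = ((*v) Jp ^^ k) v" for k
  have weight: "Jz *v f k = (a + of_nat k) *s f k" for k
    by (induction k) (simp_all add: f_def v Jz_Jp vec.scale algebra_simps)
  have "\<exists>k. f k = 0"
    by (rule orthogonal_sequence_has_zero, rule Jz_eigenvectors_orthogonal[OF weight weight]) simp
  then obtain k where k: "f k \<noteq> 0" "f (Suc k) = 0"
    using exists_least_lemma[of "\<lambda>k. f k = 0"] v(1) by (auto simp: f_def)
  have "Jp *v f k = 0"
    using k(2) by (simp add: f_def)
  with k(1) show thesis
    using weight by (rule that)
qed

end

locale su2_highest_weight = su2_representation Jx Jy Jz for Jx Jy Jz :: "complex^'n^'n" +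
  fixes h :: "complex^'n" and j :: complex
  assumes h_nonzero: "h \<noteq> 0" and Jp_h: "Jp *v h = 0" and Jz_h: "Jz *v h = j *s h"
begin

definition ladder :: "nat \<Rightarrow> complex^'n" where
  "ladder k = ((*v) Jm ^^ k) h"

lemma ladder_0 [simp]: "ladder 0 = h"
  and ladder_Suc: "ladder (Suc k) = Jm *v ladder k"
  by (simp_all add: ladder_def)

lemma Jz_ladder: "Jz *v ladder k = (j - of_nat k) *s ladder k"
proof (induction k)
  case (Suc k)
  show ?case
    by (simp add: ladder_Suc Jz_Jm Suc.IH vec.scale Finite_Cartesian_Product.vec_eq_iff algebra_simps)
qed (simp add: Jz_h)

lemma Jp_ladder_Suc: "Jp *v ladder (Suc k) = (of_nat (Suc k) * (2 * j - of_nat k)) *s ladder k"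
proof (induction k)
  case 0
  show ?case
    by (simp add: ladder_Suc Jp_Jm Jp_h Jz_h)
next
  case (Suc k)
  have "Jp *v ladder (Suc (Suc k)) = Jm *v (Jp *v ladder (Suc k)) + 2 *s (Jz *v ladder (Suc k))"
    by (simp only: ladder_Suc[of "Suc k"] Jp_Jm)
  also have "\<dots> = (of_nat (Suc k) * (2 * j - of_nat k)) *s ladder (Suc k)
      + (2 * (j - of_nat (Suc k))) *s ladder (Suc k)"
    by (simp only: Suc.IH Jz_ladder vec.scale vec.scale_scale flip: ladder_Suc)
  also have "\<dots> = (of_nat (Suc (Suc k)) * (2 * j - of_nat (Suc k))) *s ladder (Suc k)"
    by (simp add: Finite_Cartesian_Product.vec_eq_iff algebra_simps)
  finally show ?case .
qed

lemma ladder_orthogonal: "a \<noteq> b \<Longrightarrow> braket (ladder a) (ladder b) = 0"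
  by (rule Jz_eigenvectors_orthogonal[OF Jz_ladder Jz_ladder]) simp

lemma ladder_length:
  obtains N where "2 * j = of_nat N" and "\<And>k. ladder k \<noteq> 0 \<longleftrightarrow> k \<le> N"
proof -
  obtain N where N: "ladder N \<noteq> 0" "ladder (Suc N) = 0"
    using exists_least_lemma[of "\<lambda>k. ladder k = 0"] orthogonal_sequence_has_zero[OF ladder_orthogonal]
      h_nonzero by auto
  have vanish: "ladder (k + m) = 0" if "ladder k = 0" for k m
    using that by (induction m) (simp_all add: ladder_Suc)
  have "(of_nat (Suc N) * (2 * j - of_nat N)) *s ladder N = 0"
    using Jp_ladder_Suc[of N] N(2) by simp
  then have "of_nat (Suc N) * (2 * j - of_nat N) = 0"
    using N(1) by (simp only: vec.scale_eq_0_iff) simp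
  then have "2 * j = of_nat N"
    by (simp only: mult_eq_0_iff of_nat_eq_0_iff nat.distinct) simp
  moreover have "ladder k \<noteq> 0 \<longleftrightarrow> k \<le> N" for k
  proof
    assume "ladder k \<noteq> 0"
    then show "k \<le> N"
      using vanish[OF N(2), of "k - Suc N"] by (cases "k \<le> N") simp_all
  next
    assume "k \<le> N"
    then show "ladder k \<noteq> 0"
      using vanish[of k "N - k"] N(1) by auto
  qed
  ultimately show thesis
    by (rule that)
qed

lemma ladder_span_invariant:
  assumes "v \<in> vec.span (range ladder)"
  shows "Jx *v v \<in> vec.span (range ladder)" "Jy *v v \<in> vec.span (range ladder)"
    "Jz *v v \<in> vec.span (range ladder)"
proof -
  have Jp_ladder: "Jp *v ladder k \<in> vec.span (range ladder)" for k
    by (cases k) (simp_all add: Jp_h Jp_ladder_Suc vec.span_zero vec.span_scale vec.span_base)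
  have Jp: "Jp *v v \<in> vec.span (range ladder)"
    by (rule matrix_vector_mult_span_invariant[OF _ assms]) (use Jp_ladder in auto)
  have Jm: "Jm *v v \<in> vec.span (range ladder)"
    by (rule matrix_vector_mult_span_invariant[OF _ assms]) (auto simp: vec.span_base simp flip: ladder_Suc)
  have Jz_ladder_span: "Jz *v ladder k \<in> vec.span (range ladder)" for k
    unfolding Jz_ladder by (intro vec.span_scale vec.span_base) simp
  show "Jz *v v \<in> vec.span (range ladder)"
    by (rule matrix_vector_mult_span_invariant[OF _ assms]) (use Jz_ladder_span in auto)
  have "Jx *v v = (1/2) *s (Jp *v v + Jm *v v)" "Jy *v v = (- \<i> / 2) *s (Jp *v v - Jm *v v)"
    by (simp_all only: Jp_plus_Jm Jp_minus_Jm vec.scale_scale) simp_all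
  then show "Jx *v v \<in> vec.span (range ladder)" "Jy *v v \<in> vec.span (range ladder)"
    using Jp Jm by (simp_all add: vec.span_add vec.span_diff vec.span_scale)
qed

end

locale su2_irreducible_rep = su2_representation Jx Jy Jz for Jx Jy Jz :: "complex^'n^'n" +
  fixes l :: nat
  assumes irreducible: "su2_irreducible Jx Jy Jz" and dim: "CARD('n) = 2 * l + 1"
begin

lemma highest_weight_eq:
  assumes "su2_highest_weight Jx Jy Jz h j"
  shows "j = of_nat l"
proof -
  interpret su2_highest_weight Jx Jy Jz h j
    by (fact assms)
  obtain N where N: "2 * j = of_nat N" "\<And>k. ladder k \<noteq> 0 \<longleftrightarrow> k \<le> N"
    using ladder_length by blast
  have "vec.span (range ladder) = {0} \<or> vec.span (range ladder) = UNIV"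
    by (rule irreducible[unfolded su2_irreducible_def, rule_format])
      (simp add: csubspace_vec_def vec.span_zero vec.span_add vec.span_scale ladder_span_invariant)
  moreover have "h \<in> vec.span (range ladder)"
    by (rule vec.span_base) (metis ladder_0 rangeI)
  ultimately have "vec.span (range ladder) = UNIV"
    using h_nonzero by auto
  moreover have "vec.span (range ladder) = vec.span (ladder ` {..N})"
  proof -
    have "range ladder \<subseteq> insert 0 (ladder ` {..N})"
      using N(2) by (auto simp: not_le[symmetric])
    then have "vec.span (range ladder) \<subseteq> vec.span (ladder ` {..N})"
      by (metis vec.span_insert_0 vec.span_mono)
    then show ?thesis
      by (simp add: image_mono vec.span_mono subset_antisym)
  qed
  ultimately have "CARD('n) \<le> card (ladder ` {..N})"
    using vec.dim_le_card[of UNIV "ladder ` {..N}"] by (simp add: card_cart_basis)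
  also have "\<dots> \<le> Suc N"
    using card_image_le[of "{..N}" ladder] by simp
  finally have "CARD('n) \<le> Suc N" .
  moreover have "card {..N} \<le> CARD('n)"
    by (rule orthogonal_family_card_le[of _ ladder]) (use N(2) ladder_orthogonal in auto)
  ultimately have "N = 2 * l"
    using dim by simp
  then show ?thesis
    using N(1) by simp
qed

lemma standard_highest_weight_vector_exists:
  obtains h where "su2_highest_weight Jx Jy Jz h (of_nat l)"
proof -
  obtain h j where "h \<noteq> 0" "Jp *v h = 0" "Jz *v h = j *s h"
    by (rule highest_weight_vector_exists)
  then have hw: "su2_highest_weight Jx Jy Jz h j"
    by (intro su2_highest_weight.intro su2_highest_weight_axioms.intro su2_representation_axioms)
  with highest_weight_eq[OF hw] show thesis
    by (simp add: that)
qed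

end

section \<open>The standard basis\<close>

locale su2_standard_basis = su2_highest_weight Jx Jy Jz h "of_nat l"
  for Jx Jy Jz :: "complex^'n^'n" and h :: "complex^'n" and l :: nat +
  assumes dim: "CARD('n) = 2 * l + 1"
begin

lemma ladder_nonzero_iff: "ladder k \<noteq> 0 \<longleftrightarrow> k \<le> 2 * l"
proof -
  obtain N :: nat where "2 * of_nat l = (of_nat N :: complex)" "\<And>k. ladder k \<noteq> 0 \<longleftrightarrow> k \<le> N"
    using ladder_length by blast
  moreover from this(1) have "N = 2 * l"
    by (metis of_nat_eq_iff of_nat_mult of_nat_numeral)
  ultimately show ?thesis
    by simp
qed

definition sqnorm :: "nat \<Rightarrow> real" where
  "sqnorm k = (norm (ladder k))\<^sup>2"

lemma braket_ladder_self: "braket (ladder k) (ladder k) = complex_of_real (sqnorm k)"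
  by (simp add: sqnorm_def braket_self)

lemma sqnorm_pos: "k \<le> 2 * l \<Longrightarrow> sqnorm k > 0"
  using ladder_nonzero_iff[of k] by (simp add: sqnorm_def)

lemma sqnorm_Suc: "sqnorm (Suc k) = real (Suc k) * (2 * real l - real k) * sqnorm k"
proof -
  have "braket (ladder (Suc k)) (ladder (Suc k)) = braket (ladder k) (Jp *v ladder (Suc k))"
    by (simp add: braket_Jp ladder_Suc)
  also have "\<dots> = complex_of_real (real (Suc k) * (2 * real l - real k)) * braket (ladder k) (ladder k)"
    by (simp add: Jp_ladder_Suc braket_scale_right)
  finally show ?thesis
    by (simp add: braket_ladder_self flip: of_real_mult)
qed

lemma ladder_expansion: "v = (\<Sum>k\<le>2 * l. (braket (ladder k) v / sqnorm k) *s ladder k)"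
  using orthogonal_family_expansion[of "{..2 * l}" ladder v] dim ladder_nonzero_iff ladder_orthogonal
  by (simp add: braket_ladder_self)

lemma eq_0_if_ladder_coeffs_eq_0: "(\<And>k. braket (ladder k) v = 0) \<Longrightarrow> v = 0"
  using ladder_expansion[of v] by simp

lemma parseval:
  "braket v w = (\<Sum>k\<le>2 * l. cnj (braket (ladder k) v) * braket (ladder k) w / sqnorm k)"
proof -
  have "braket v w = (\<Sum>k\<le>2 * l. (braket (ladder k) w / sqnorm k) * braket v (ladder k))"
    by (subst ladder_expansion[of w]) (simp add: braket_sum_right braket_scale_right)
  then show ?thesis
    by (simp add: cnj_braket mult_ac)
qed

lemma kernel_Jz: "{v. Jz *v v = 0} = range (\<lambda>c. c *s ladder l)"
proof (intro equalityI subsetI)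
  fix v assume "v \<in> {v. Jz *v v = 0}"
  then have "Jz *v v = 0 *s v"
    by simp
  then have "braket (ladder k) v = 0" if "k \<noteq> l" for k
    using that by (intro Jz_eigenvectors_orthogonal[OF Jz_ladder]) auto
  then have "v = (\<Sum>k\<in>{l}. (braket (ladder k) v / sqnorm k) *s ladder k)"
    by (subst ladder_expansion, intro sum.mono_neutral_right) auto
  then have "v = (braket (ladder l) v / sqnorm l) *s ladder l"
    by simp
  then show "v \<in> range (\<lambda>c. c *s ladder l)"
    by (metis rangeI)
qed (auto simp: vec.scale Jz_ladder)

lemma ladder_coeff_recurrence:
  assumes "Jp *v v = complex_of_real s *s (Jm *v v)"
  shows "braket (ladder k) v = braket h v * complex_of_real (kernel_coeff s l k)"
proof -
  have shift: "braket (ladder (Suc k)) v = complex_of_real s * braket (Jp *v ladder k) v" for k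
    by (simp add: ladder_Suc assms braket_scale_right flip: braket_Jp braket_Jm)
  have first: "braket (ladder (Suc 0)) v = 0"
    using shift[of 0] by (simp add: Jp_h)
  have step: "braket (ladder (Suc (Suc k))) v
      = complex_of_real (s * (real (Suc k) * (2 * real l - real k))) * braket (ladder k) v" for k
    by (simp add: shift Jp_ladder_Suc braket_scale_left)
  have "braket (ladder k) v = braket h v * complex_of_real (kernel_coeff s l k) \<and>
      braket (ladder (Suc k)) v = braket h v * complex_of_real (kernel_coeff s l (Suc k))"
    by (induction k) (simp_all add: first step)
  then show ?thesis
    by simp
qed

lemma kernel_vector_normalization:
  assumes "w \<noteq> 0" "Jp *v w = complex_of_real s *s (Jm *v w)"
  obtains a where "\<And>k. braket (ladder k) (a *s w) = complex_of_real (kernel_coeff s l k)"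
proof
  have "braket h w \<noteq> 0"
    using assms(1) eq_0_if_ladder_coeffs_eq_0[of w] ladder_coeff_recurrence[OF assms(2)] by auto
  then show "braket (ladder k) ((1 / braket h w) *s w) = complex_of_real (kernel_coeff s l k)" for k
    by (simp add: braket_scale_right ladder_coeff_recurrence[OF assms(2)])
qed

lemma kernel_coeff_sq_over_sqnorm:
  assumes "m \<le> l"
  shows "(kernel_coeff 1 l (2 * m))\<^sup>2 / sqnorm (2 * m)
    = central_binom m * central_binom (l - m) / (central_binom l * sqnorm 0)"
proof -
  have "(kernel_coeff 1 l (2 * m))\<^sup>2 * (central_binom l * sqnorm 0)
      = central_binom m * central_binom (l - m) * sqnorm (2 * m)"
    using assms
  proof (induction m)
    case (Suc m)
    define a b where "a = (2 * real m + 1) * (2 * real l - 2 * real m)"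
      and "b = (2 * real m + 2) * (2 * real l - 2 * real m - 1)"
    have coeff: "kernel_coeff 1 l (2 * Suc m) = a * kernel_coeff 1 l (2 * m)"
      by (simp add: a_def algebra_simps)
    have norm: "sqnorm (2 * Suc m) = b * a * sqnorm (2 * m)"
      by (simp add: sqnorm_Suc a_def b_def algebra_simps)
    have "(kernel_coeff 1 l (2 * Suc m))\<^sup>2 * (central_binom l * sqnorm 0)
        = a * a * ((kernel_coeff 1 l (2 * m))\<^sup>2 * (central_binom l * sqnorm 0))"
      unfolding coeff by (simp add: power2_eq_square mult_ac)
    also have "\<dots> = a * (a * (central_binom m * central_binom (l - m))) * sqnorm (2 * m)"
      using Suc by (simp add: mult_ac)
    also have "\<dots> = central_binom (Suc m) * central_binom (l - Suc m) * sqnorm (2 * Suc m)"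
      using central_binom_product_Suc[of m l] Suc.prems
      unfolding norm a_def b_def by (simp add: mult_ac)
    finally show ?case .
  qed (simp add: central_binom_def)
  moreover have "sqnorm (2 * m) \<noteq> 0" "central_binom l * sqnorm 0 \<noteq> 0"
    using sqnorm_pos[of "2 * m"] sqnorm_pos[of 0] central_binom_pos[of l] assms by auto
  ultimately show ?thesis
    by (simp add: frac_eq_eq)
qed

lemma sum_kernel_coeff_sq:
  assumes "s\<^sup>2 = 1"
  shows "(\<Sum>k\<le>2 * l. (kernel_coeff s l k)\<^sup>2 / sqnorm k) = 4 ^ l / (central_binom l * sqnorm 0)"
proof -
  have sign: "(s ^ q)\<^sup>2 = 1" for q
    by (induction q) (simp_all add: power_mult_distrib assms)
  have "(\<Sum>k\<le>2 * l. (kernel_coeff s l k)\<^sup>2 / sqnorm k)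
      = (\<Sum>q\<le>l. (kernel_coeff 1 l (2 * q))\<^sup>2 / sqnorm (2 * q))"
    by (subst sum_atMost_double_odd_zero) (simp_all add: kernel_coeff_even[of s] power_mult_distrib sign)
  also have "\<dots> = (\<Sum>q\<le>l. central_binom q * central_binom (l - q)) / (central_binom l * sqnorm 0)"
    by (simp add: kernel_coeff_sq_over_sqnorm sum_divide_distrib)
  finally show ?thesis
    by (simp add: central_binom_convolution)
qed

lemma sum_kernel_coeff_mixed:
  "(\<Sum>k\<le>2 * l. kernel_coeff (-1) l k * kernel_coeff 1 l k / sqnorm k)
     = (if even l then 4 ^ (l div 2) * central_binom (l div 2) else 0) / (central_binom l * sqnorm 0)"
proof -
  have "(\<Sum>k\<le>2 * l. kernel_coeff (-1) l k * kernel_coeff 1 l k / sqnorm k)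
      = (\<Sum>q\<le>l. (-1) ^ q * ((kernel_coeff 1 l (2 * q))\<^sup>2 / sqnorm (2 * q)))"
    by (subst sum_atMost_double_odd_zero) (simp_all add: kernel_coeff_even[of "-1"] power2_eq_square mult.assoc)
  also have "\<dots> = (\<Sum>q\<le>l. (-1) ^ q * central_binom q * central_binom (l - q)) / (central_binom l * sqnorm 0)"
    by (simp add: kernel_coeff_sq_over_sqnorm sum_divide_distrib mult.assoc)
  finally show ?thesis
    by (simp add: alternating_central_binom_convolution)
qed

lemma kernel_coeff_middle_sq:
  "(kernel_coeff (-1) l l)\<^sup>2 = (central_overlap l)\<^sup>2 * 4 ^ l * sqnorm l / (central_binom l * sqnorm 0)"
proof (cases "even l")
  case True
  then obtain p where l: "l = 2 * p"
    by blast
  have "(kernel_coeff (-1) l l)\<^sup>2 = (kernel_coeff 1 l l)\<^sup>2"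
    using kernel_coeff_middle[of l] parity_sign_sq[of l] by (simp add: power_mult_distrib)
  also have "\<dots> = central_binom p * central_binom p * sqnorm l / (central_binom l * sqnorm 0)"
    using kernel_coeff_sq_over_sqnorm[of p] sqnorm_pos[of l] by (simp add: l field_simps)
  finally have "(kernel_coeff (-1) l l)\<^sup>2 = central_binom p * central_binom p * sqnorm l / (central_binom l * sqnorm 0)" .
  moreover have "(central_overlap l)\<^sup>2 * 4 ^ l = central_binom p * central_binom p"
    unfolding l by (rule central_overlap_sq)
  ultimately show ?thesis
    by simp
qed (auto simp: central_overlap_def elim!: oddE)

lemma Jx_kernel_vector:
  assumes "w \<noteq> 0" "Jx *v w = 0"
  obtains x where "Jx *v x = 0" "\<And>k. braket (ladder k) x = complex_of_real (kernel_coeff (-1) l k)"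
proof -
  have "Jp *v w + Jm *v w = 0"
    using Jp_plus_Jm[of w] assms(2) by simp
  then have "Jp *v w = complex_of_real (-1) *s (Jm *v w)"
    by (simp add: eq_neg_iff_add_eq_0)
  then obtain a where "\<And>k. braket (ladder k) (a *s w) = complex_of_real (kernel_coeff (-1) l k)"
    using kernel_vector_normalization[OF assms(1)] by blast
  moreover have "Jx *v (a *s w) = 0"
    by (simp add: vec.scale assms(2))
  ultimately show thesis
    using that by blast
qed

lemma Jy_kernel_vector:
  assumes "w \<noteq> 0" "Jy *v w = 0"
  obtains y where "Jy *v y = 0" "\<And>k. braket (ladder k) y = complex_of_real (kernel_coeff 1 l k)"
proof -
  have "Jp *v w - Jm *v w = 0"
    using Jp_minus_Jm[of w] assms(2) by simp
  then have "Jp *v w = complex_of_real 1 *s (Jm *v w)"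
    by simp
  then obtain b where "\<And>k. braket (ladder k) (b *s w) = complex_of_real (kernel_coeff 1 l k)"
    using kernel_vector_normalization[OF assms(1)] by blast
  moreover have "Jy *v (b *s w) = 0"
    by (simp add: vec.scale assms(2))
  ultimately show thesis
    using that by blast
qed

lemma braket_real_coeffs:
  assumes "\<And>k. braket (ladder k) x = complex_of_real (f k)" "\<And>k. braket (ladder k) y = complex_of_real (g k)"
  shows "braket x y = complex_of_real (\<Sum>k\<le>2 * l. f k * g k / sqnorm k)"
  unfolding of_real_sum by (subst parseval) (simp add: assms)

lemma equal_overlaps_from_kernel_vectors:
  assumes "wx \<noteq> 0" "Jx *v wx = 0" "wy \<noteq> 0" "Jy *v wy = 0"
  shows "\<exists>x y z. Jx *v x = 0 \<and> Jy *v y = 0 \<and> Jz *v z = 0 \<and> norm x = 1 \<and> norm y = 1 \<and> norm z = 1 \<and>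
    braket x y = central_overlap l \<and> braket y z = central_overlap l \<and> braket z x = central_overlap l"
proof -
  obtain x where x: "Jx *v x = 0" "\<And>k. braket (ladder k) x = complex_of_real (kernel_coeff (-1) l k)"
    using Jx_kernel_vector[OF assms(1,2)] by blast
  obtain y where y: "Jy *v y = 0" "\<And>k. braket (ladder k) y = complex_of_real (kernel_coeff 1 l k)"
    using Jy_kernel_vector[OF assms(3,4)] by blast
  define X where "X = 4 ^ l / (central_binom l * sqnorm 0)"
  have "X > 0"
    using central_binom_pos[of l] sqnorm_pos[of 0] by (simp add: X_def)
  have xx: "braket x x = X" and yy: "braket y y = X"
    by (simp_all only: braket_real_coeffs[OF x(2) x(2)] braket_real_coeffs[OF y(2) y(2)]
        flip: power2_eq_square) (simp_all add: sum_kernel_coeff_sq X_def)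
  have xy: "braket x y = parity_sign l * central_overlap l * X"
    by (simp only: braket_real_coeffs[OF x(2) y(2)] sum_kernel_coeff_mixed alternating_convolution_eq_overlap)
      (simp add: X_def)
  have yz: "braket y (ladder l) = parity_sign l * kernel_coeff (-1) l l"
    using y(2)[of l] cnj_braket[of "ladder l" y] by (simp add: kernel_coeff_middle)
  have "sqnorm l > 0"
    using sqnorm_pos by simp
  moreover have "(kernel_coeff (-1) l l)\<^sup>2 = (central_overlap l)\<^sup>2 * X * sqnorm l"
    by (simp add: kernel_coeff_middle_sq X_def)
  ultimately obtain \<alpha> \<beta> \<gamma> where "norm (\<alpha> *s x) = 1" "norm (\<beta> *s y) = 1" "norm (\<gamma> *s ladder l) = 1"
    "braket (\<alpha> *s x) (\<beta> *s y) = central_overlap l" "braket (\<beta> *s y) (\<gamma> *s ladder l) = central_overlap l"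
    "braket (\<gamma> *s ladder l) (\<alpha> *s x) = central_overlap l"
    using rescale_to_equal_overlaps[OF xx yy braket_ladder_self \<open>X > 0\<close> _ xy yz x(2)[of l]] parity_sign_sq
    by blast
  moreover have "Jx *v (\<alpha> *s x) = 0" "Jy *v (\<beta> *s y) = 0" "Jz *v (\<gamma> *s ladder l) = 0"
    using x(1) y(1) by (simp_all add: vec.scale Jz_ladder)
  ultimately show ?thesis
    by blast
qed

end

lemma su2_rep_rotate: "su2_rep Jx Jy Jz \<Longrightarrow> su2_rep Jy Jz Jx"
  by (auto simp: su2_rep_def)

lemma su2_irreducible_rotate: "su2_irreducible Jx Jy Jz \<Longrightarrow> su2_irreducible Jy Jz Jx"
  unfolding su2_irreducible_def by blast

lemma su2_irreducible_rep_rotate: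
  "su2_irreducible_rep Jx Jy Jz l \<Longrightarrow> su2_irreducible_rep Jy Jz Jx l"
  by (simp add: su2_irreducible_rep_def su2_irreducible_rep_axioms_def su2_representation_def
      su2_rep_rotate su2_irreducible_rotate)

context su2_irreducible_rep
begin

lemma standard_basis_exists:
  obtains h where "su2_standard_basis Jx Jy Jz h l"
proof -
  obtain h where "su2_highest_weight Jx Jy Jz h (of_nat l)"
    by (rule standard_highest_weight_vector_exists)
  then show thesis
    using dim by (intro that su2_standard_basis.intro su2_standard_basis_axioms.intro)
qed

lemma kernel_Jz_line:
  obtains u where "u \<noteq> 0" "{v. Jz *v v = 0} = range (\<lambda>c. c *s u)"
proof -
  obtain h where "su2_standard_basis Jx Jy Jz h l"
    by (rule standard_basis_exists)
  then interpret su2_standard_basis Jx Jy Jz h l .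
  show thesis
    using ladder_nonzero_iff[of l] kernel_Jz by (intro that) simp_all
qed

lemma kernel_lines:
  obtains ux uy uz where "ux \<noteq> 0" "{v. Jx *v v = 0} = range (\<lambda>c. c *s ux)"
    "uy \<noteq> 0" "{v. Jy *v v = 0} = range (\<lambda>c. c *s uy)"
    "uz \<noteq> 0" "{v. Jz *v v = 0} = range (\<lambda>c. c *s uz)"
proof -
  have yzx: "su2_irreducible_rep Jy Jz Jx l"
    by (rule su2_irreducible_rep_rotate[OF su2_irreducible_rep_axioms])
  then have zxy: "su2_irreducible_rep Jz Jx Jy l"
    by (rule su2_irreducible_rep_rotate)
  obtain ux where "ux \<noteq> 0" "{v. Jx *v v = 0} = range (\<lambda>c. c *s ux)"
    by (rule su2_irreducible_rep.kernel_Jz_line[OF yzx])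
  moreover obtain uy where "uy \<noteq> 0" "{v. Jy *v v = 0} = range (\<lambda>c. c *s uy)"
    by (rule su2_irreducible_rep.kernel_Jz_line[OF zxy])
  moreover obtain uz where "uz \<noteq> 0" "{v. Jz *v v = 0} = range (\<lambda>c. c *s uz)"
    by (rule kernel_Jz_line)
  ultimately show thesis
    by (rule that)
qed

lemma equal_overlaps:
  "\<exists>x y z. Jx *v x = 0 \<and> Jy *v y = 0 \<and> Jz *v z = 0 \<and> norm x = 1 \<and> norm y = 1 \<and> norm z = 1 \<and>
    braket x y = central_overlap l \<and> braket y z = central_overlap l \<and> braket z x = central_overlap l"
proof -
  obtain ux uy uz where u: "ux \<noteq> 0" "{v. Jx *v v = 0} = range (\<lambda>c. c *s ux)"
    "uy \<noteq> 0" "{v. Jy *v v = 0} = range (\<lambda>c. c *s uy)"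
    "uz \<noteq> 0" "{v. Jz *v v = 0} = range (\<lambda>c. c *s uz)"
    by (rule kernel_lines)
  have "ux \<in> {v. Jx *v v = 0}" "uy \<in> {v. Jy *v v = 0}"
    unfolding u(2,4) by (rule range_eqI[where x = 1], simp)+
  moreover obtain h where "su2_standard_basis Jx Jy Jz h l"
    by (rule standard_basis_exists)
  ultimately show ?thesis
    using su2_standard_basis.equal_overlaps_from_kernel_vectors u(1,3) by simp
qed

end

theorem lemma4p1:
  fixes Jx Jy Jz :: "complex^'n^'n" and l :: nat
  assumes "l \<ge> 1"
    and "CARD('n) = 2 * l + 1"
    and "su2_rep Jx Jy Jz"
    and "su2_irreducible Jx Jy Jz"
  shows "rank (kernel_projector Jx) = 1 \<and> rank (kernel_projector Jy) = 1 \<and>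
         rank (kernel_projector Jz) = 1 \<and>
         (\<exists>x y z. Jx *v x = 0 \<and> Jy *v y = 0 \<and> Jz *v z = 0 \<and>
            norm x = 1 \<and> norm y = 1 \<and> norm z = 1 \<and>
            (let c = (if even l
                      then complex_of_real ((-1) ^ (l div 2) / 2 ^ l * real (l choose (l div 2)))
                      else 0)
             in braket x y = c \<and> braket y z = c \<and> braket z x = c))"
proof -
  interpret su2_irreducible_rep Jx Jy Jz l
    using assms(2-4) by (simp add: su2_irreducible_rep_def su2_irreducible_rep_axioms_def su2_representation_def)
  obtain ux uy uz where "ux \<noteq> 0" "{v. Jx *v v = 0} = range (\<lambda>c. c *s ux)"
    "uy \<noteq> 0" "{v. Jy *v v = 0} = range (\<lambda>c. c *s uy)"
    "uz \<noteq> 0" "{v. Jz *v v = 0} = range (\<lambda>c. c *s uz)"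
    by (rule kernel_lines)
  then have "rank (kernel_projector Jx) = 1" "rank (kernel_projector Jy) = 1" "rank (kernel_projector Jz) = 1"
    by (simp_all add: rank_kernel_projector_line)
  moreover have "(if even l then complex_of_real ((-1) ^ (l div 2) / 2 ^ l * real (l choose (l div 2))) else 0)
      = complex_of_real (central_overlap l)"
    by (simp add: central_overlap_def)
  ultimately show ?thesis
    using equal_overlaps by (simp only: Let_def)
qed

end
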